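(* Let $R$ be a ring. The following are equivalent: (1) $R$ is feckly clean; (2) for any disjoint closed sets $A,B$ of $\operatorname{Max}(R)$ there exists $e\in R$ such that $A\subseteq V(e)$, $B\subseteq V(1-e)$ and $eR(1-e)\subseteq J(R)$; (3) for any $a\in R$ there exists $e\in R$ such that $V(a)\subseteq V(e)$, $V(1-a)\subseteq V(1-e)$ and $eR(1-e)\subseteq J(R)$.
   Context: Rings are associative with identity, not necessarily commutative; $J(R)$ is the Jacobson radical. An element $u\in R$ is full if $RuR=R$. An element $a\in R$ is feckly clean if there exist $e\in R$ and a full element $u\in R$ with $a=e+u$ and $eR(1-e)\subseteq J(R)$; $R$ is feckly clean if every element is feckly clean. $\operatorname{Max}(R)$ is the set of all maximal (two-sided) ideals of $R$, topologized so that the closed sets are exactly the sets $V(I)=\{P\in\operatorname{Max}(R): I\subseteq P\}$ for ideals $I$ of $R$. For $a\in R$, $V(a)=V(RaR)$. *)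

theory Defs
  imports Main
begin

definition left_ideal :: "'a::ring_1 set \<Rightarrow> bool" where
  "left_ideal I \<longleftrightarrow> 0 \<in> I \<and> (\<forall>x\<in>I. \<forall>y\<in>I. x + y \<in> I) \<and> (\<forall>x\<in>I. - x \<in> I)
     \<and> (\<forall>r. \<forall>x\<in>I. r * x \<in> I)"

definition two_sided_ideal :: "'a::ring_1 set \<Rightarrow> bool" where
  "two_sided_ideal I \<longleftrightarrow> 0 \<in> I \<and> (\<forall>x\<in>I. \<forall>y\<in>I. x + y \<in> I) \<and> (\<forall>x\<in>I. - x \<in> I)
     \<and> (\<forall>r. \<forall>x\<in>I. r * x \<in> I \<and> x * r \<in> I)"

definition maximal_left_ideal :: "'a::ring_1 set \<Rightarrow> bool" where
  "maximal_left_ideal M \<longleftrightarrow> left_ideal M \<and> M \<noteq> UNIV \<and>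
     (\<forall>K. left_ideal K \<and> M \<subseteq> K \<longrightarrow> K = M \<or> K = UNIV)"

definition maximal_ideal :: "'a::ring_1 set \<Rightarrow> bool" where
  "maximal_ideal M \<longleftrightarrow> two_sided_ideal M \<and> M \<noteq> UNIV \<and>
     (\<forall>K. two_sided_ideal K \<and> M \<subseteq> K \<longrightarrow> K = M \<or> K = UNIV)"

definition jacobson :: "'a::ring_1 set" where
  "jacobson = \<Inter> {M. maximal_left_ideal M}"

text \<open>Two-sided ideal generated by a set; RaR is ideal_gen {a}.\<close>
definition ideal_gen :: "'a::ring_1 set \<Rightarrow> 'a set" where
  "ideal_gen S = \<Inter> {I. two_sided_ideal I \<and> S \<subseteq> I}"

definition full :: "'a::ring_1 \<Rightarrow> bool" where
  "full u \<longleftrightarrow> ideal_gen {u} = UNIV"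

definition corner_in_J :: "'a::ring_1 \<Rightarrow> bool" where
  "corner_in_J e \<longleftrightarrow> (\<forall>r. e * r * (1 - e) \<in> jacobson)"

definition feckly_clean_elem :: "'a::ring_1 \<Rightarrow> bool" where
  "feckly_clean_elem a \<longleftrightarrow> (\<exists>e u. a = e + u \<and> full u \<and> corner_in_J e)"

definition feckly_clean :: "'a::ring_1 itself \<Rightarrow> bool" where
  "feckly_clean _ \<longleftrightarrow> (\<forall>a::'a. feckly_clean_elem a)"

definition MaxSpec :: "'a::ring_1 set set" where
  "MaxSpec = {P. maximal_ideal P}"

definition V :: "'a::ring_1 set \<Rightarrow> 'a set set" where
  "V I = {P \<in> MaxSpec. I \<subseteq> P}"

definition V_elem :: "'a::ring_1 \<Rightarrow> 'a set set" where
  "V_elem a = V (ideal_gen {a})"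

definition max_closed :: "'a::ring_1 set set \<Rightarrow> bool" where
  "max_closed A \<longleftrightarrow> (\<exists>I. two_sided_ideal I \<and> A = V I)"

end

theory Submission
  imports Defs
begin

(* The only ring-theoretic input is that for eR(1 - e) \<subseteq> J(R) every maximal ideal P
   contains e or 1 - e; this needs J(R) \<subseteq> P and primeness of maximal ideals, which we
   derive from the definitions (J(R) is the intersection of the maximal left ideals).
   With it, a - e is full (lies in no maximal ideal) exactly when e separates V(1 - a)
   from V(a), which gives (1) \<longleftrightarrow> (3) directly.  For (2) \<longleftrightarrow> (3), closed sets are V(I)
   for ideals I, and disjointness of V(I), V(K) means I + K = R, i.e. 1 = i + k, so
   separating V(i) from V(1 - i) = V(k) separates the two closed sets. *)

lemma two_sided_ideal_iff_left:
  "two_sided_ideal I \<longleftrightarrow> left_ideal I \<and> (\<forall>r. \<forall>x\<in>I. x * r \<in> I)"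
  unfolding two_sided_ideal_def left_ideal_def by blast

lemma left_ideal_add: "left_ideal I \<Longrightarrow> x \<in> I \<Longrightarrow> y \<in> I \<Longrightarrow> x + y \<in> I"
  unfolding left_ideal_def by blast

lemma left_ideal_closed:
  assumes "left_ideal I" "x \<in> I"
  shows "- x \<in> I" "r * x \<in> I"
  using assms unfolding left_ideal_def by blast+

lemma two_sided_ideal_add: "two_sided_ideal I \<Longrightarrow> x \<in> I \<Longrightarrow> y \<in> I \<Longrightarrow> x + y \<in> I"
  unfolding two_sided_ideal_def by blast

lemma two_sided_ideal_closed:
  assumes "two_sided_ideal I" "x \<in> I"
  shows "- x \<in> I" "r * x \<in> I" "x * r \<in> I"
  using assms unfolding two_sided_ideal_def by blast+

lemma left_ideal_diff: "left_ideal I \<Longrightarrow> x \<in> I \<Longrightarrow> y \<in> I \<Longrightarrow> x - y \<in> I"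
  unfolding left_ideal_def by (simp only: diff_conv_add_uminus)

lemma left_ideal_one_UNIV: "left_ideal I \<Longrightarrow> 1 \<in> I \<Longrightarrow> I = UNIV"
  unfolding left_ideal_def by (metis UNIV_eq_I mult.right_neutral)

lemma two_sided_ideal_one_UNIV: "two_sided_ideal I \<Longrightarrow> 1 \<in> I \<Longrightarrow> I = UNIV"
  using left_ideal_one_UNIV two_sided_ideal_iff_left by blast

lemma left_ideal_chain_Union:
  fixes C :: "'a::ring_1 set set"
  assumes "C \<noteq> {}" and ideals: "\<forall>K\<in>C. left_ideal K"
    and chain: "\<forall>X\<in>C. \<forall>Y\<in>C. X \<subseteq> Y \<or> Y \<subseteq> X"
  shows "left_ideal (\<Union>C)"
  unfolding left_ideal_def
proof (intro conjI ballI allI)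
  obtain X where "X \<in> C" using assms(1) by blast
  moreover have "0 \<in> X" using ideals \<open>X \<in> C\<close> by (simp add: left_ideal_def)
  ultimately show "0 \<in> \<Union>C" by blast
next
  fix x y assume "x \<in> \<Union>C" "y \<in> \<Union>C"
  then obtain X Y where "X \<in> C" "Y \<in> C" "x \<in> X" "y \<in> Y" by blast
  then obtain Z where Z: "Z \<in> C" "x \<in> Z" "y \<in> Z" using chain by blast
  then have "x + y \<in> Z" using ideals by (simp add: left_ideal_def)
  then show "x + y \<in> \<Union>C" using Z(1) by blast
next
  fix x r assume "x \<in> \<Union>C"
  then obtain X where X: "X \<in> C" "x \<in> X" by blast
  then have "- x \<in> X" "r * x \<in> X" using ideals by (simp_all add: left_ideal_def)
  then show "- x \<in> \<Union>C" "r * x \<in> \<Union>C" using X(1) by blast+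
qed

lemma two_sided_ideal_chain_Union:
  fixes C :: "'a::ring_1 set set"
  assumes "C \<noteq> {}" "\<forall>K\<in>C. two_sided_ideal K" "\<forall>X\<in>C. \<forall>Y\<in>C. X \<subseteq> Y \<or> Y \<subseteq> X"
  shows "two_sided_ideal (\<Union>C)"
  using left_ideal_chain_Union[OF assms(1) _ assms(3)] assms(2)
  unfolding two_sided_ideal_iff_left by blast

lemma exists_maximal_proper:
  fixes I :: "'a::ring_1 set"
  assumes "Q I" "1 \<notin> I"
    and chain_closed: "\<And>C. C \<noteq> {} \<Longrightarrow> \<forall>K\<in>C. Q K \<Longrightarrow> \<forall>X\<in>C. \<forall>Y\<in>C. X \<subseteq> Y \<or> Y \<subseteq> X
                         \<Longrightarrow> Q (\<Union>C)"
  shows "\<exists>M. Q M \<and> I \<subseteq> M \<and> 1 \<notin> M \<and> (\<forall>K. Q K \<and> M \<subseteq> K \<longrightarrow> K = M \<or> 1 \<in> K)"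
proof -
  define A where "A = {K. Q K \<and> I \<subseteq> K \<and> 1 \<notin> K}"
  have "\<exists>M\<in>A. \<forall>X\<in>A. M \<subseteq> X \<longrightarrow> X = M"
  proof (rule subset_Zorn)
    fix C assume C: "subset.chain A C"
    show "\<exists>U\<in>A. \<forall>X\<in>C. X \<subseteq> U"
    proof (cases "C = {}")
      case True
      have "I \<in> A" using assms(1,2) unfolding A_def by blast
      then show ?thesis using True by blast
    next
      case False
      have members: "\<forall>K\<in>C. Q K \<and> I \<subseteq> K \<and> 1 \<notin> K"
        using C unfolding subset_chain_def A_def by blast
      have "\<forall>X\<in>C. \<forall>Y\<in>C. X \<subseteq> Y \<or> Y \<subseteq> X"
        using C unfolding subset_chain_def by blast
      then have "Q (\<Union>C)" using chain_closed[OF False] members by blast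
      moreover have "I \<subseteq> \<Union>C" "1 \<notin> \<Union>C" using members False by blast+
      ultimately have "\<Union>C \<in> A" unfolding A_def by blast
      then show ?thesis by blast
    qed
  qed
  then obtain M where M: "M \<in> A" "\<forall>X\<in>A. M \<subseteq> X \<longrightarrow> X = M" by blast
  then have "\<forall>K. Q K \<and> M \<subseteq> K \<longrightarrow> K = M \<or> 1 \<in> K" unfolding A_def by blast
  with M(1) show ?thesis unfolding A_def by blast
qed

lemma maximal_idealD:
  assumes "maximal_ideal P"
  shows "two_sided_ideal P" "1 \<notin> P"
  using assms two_sided_ideal_one_UNIV unfolding maximal_ideal_def by blast+

lemma maximal_ideal_eq:
  "maximal_ideal P \<Longrightarrow> two_sided_ideal K \<Longrightarrow> P \<subseteq> K \<Longrightarrow> K \<noteq> UNIV \<Longrightarrow> K = P"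
  unfolding maximal_ideal_def by blast

lemma maximal_left_idealD:
  assumes "maximal_left_ideal M"
  shows "left_ideal M" "1 \<notin> M"
  using assms left_ideal_one_UNIV unfolding maximal_left_ideal_def by blast+

lemma maximal_left_ideal_eq:
  "maximal_left_ideal M \<Longrightarrow> left_ideal K \<Longrightarrow> M \<subseteq> K \<Longrightarrow> K \<noteq> UNIV \<Longrightarrow> K = M"
  unfolding maximal_left_ideal_def by blast

lemma exists_maximal_ideal:
  fixes I :: "'a::ring_1 set"
  assumes "two_sided_ideal I" "I \<noteq> UNIV"
  shows "\<exists>P. maximal_ideal P \<and> I \<subseteq> P"
proof -
  have "1 \<notin> I" using assms two_sided_ideal_one_UNIV by blast
  from exists_maximal_proper[of two_sided_ideal, OF assms(1) this two_sided_ideal_chain_Union]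
  obtain M where "two_sided_ideal M" "I \<subseteq> M" "1 \<notin> M"
    "\<forall>K. two_sided_ideal K \<and> M \<subseteq> K \<longrightarrow> K = M \<or> 1 \<in> K"
    by blast
  then show ?thesis unfolding maximal_ideal_def using two_sided_ideal_one_UNIV by blast
qed

lemma exists_maximal_left_ideal:
  fixes I :: "'a::ring_1 set"
  assumes "left_ideal I" "I \<noteq> UNIV"
  shows "\<exists>M. maximal_left_ideal M \<and> I \<subseteq> M"
proof -
  have "1 \<notin> I" using assms left_ideal_one_UNIV by blast
  from exists_maximal_proper[of left_ideal, OF assms(1) this left_ideal_chain_Union]
  obtain M where "left_ideal M" "I \<subseteq> M" "1 \<notin> M"
    "\<forall>K. left_ideal K \<and> M \<subseteq> K \<longrightarrow> K = M \<or> 1 \<in> K"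
    by blast
  then show ?thesis unfolding maximal_left_ideal_def using left_ideal_one_UNIV by blast
qed

lemma left_ideal_right_quotient:
  assumes L: "left_ideal L"
  shows "left_ideal {x. x * r \<in> L}"
  unfolding left_ideal_def
proof (intro conjI ballI allI)
  show "0 \<in> {x. x * r \<in> L}" using L unfolding left_ideal_def by simp
  fix x y s assume "x \<in> {x. x * r \<in> L}" "y \<in> {x. x * r \<in> L}"
  then show "x + y \<in> {x. x * r \<in> L}" "- x \<in> {x. x * r \<in> L}" "s * x \<in> {x. x * r \<in> L}"
    using left_ideal_add[OF L] left_ideal_closed[OF L] by (simp_all add: distrib_right mult.assoc)
qed

lemma left_ideal_core:
  assumes L: "left_ideal L"
  shows "two_sided_ideal {x. \<forall>r. x * r \<in> L}"
  unfolding two_sided_ideal_def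
proof (intro conjI ballI allI)
  show "0 \<in> {x. \<forall>r. x * r \<in> L}" using L unfolding left_ideal_def by simp
  fix x y s assume x: "x \<in> {x. \<forall>r. x * r \<in> L}" and y: "y \<in> {x. \<forall>r. x * r \<in> L}"
  show "x + y \<in> {x. \<forall>r. x * r \<in> L}" "- x \<in> {x. \<forall>r. x * r \<in> L}"
    "s * x \<in> {x. \<forall>r. x * r \<in> L}"
    using x y left_ideal_add[OF L] left_ideal_closed[OF L]
    by (simp_all add: distrib_right mult.assoc)
  have "x * (s * r) \<in> L" for r using x by blast
  then show "x * s \<in> {x. \<forall>r. x * r \<in> L}" by (simp add: mult.assoc)
qed

(* Maximal ideals are prime: if aRb \<subseteq> P then a \<in> P or b \<in> P.  The set
   {x. xRb \<subseteq> P} is a two-sided ideal containing P and a, hence everything, so b \<in> P. *)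
lemma maximal_ideal_prime:
  assumes P: "maximal_ideal P" and abP: "\<forall>r. a * r * b \<in> P"
  shows "a \<in> P \<or> b \<in> P"
proof (rule ccontr)
  assume not_in: "\<not> (a \<in> P \<or> b \<in> P)"
  define Q where "Q = {x. \<forall>r. x * r \<in> {y. y * b \<in> P}}"
  have PI: "two_sided_ideal P" using maximal_idealD(1)[OF P] .
  then have "two_sided_ideal Q"
    unfolding Q_def using left_ideal_core left_ideal_right_quotient two_sided_ideal_iff_left
    by blast
  moreover have "P \<subseteq> Q" using two_sided_ideal_closed(3)[OF PI] unfolding Q_def by blast
  moreover have "a \<in> Q - P" using abP not_in unfolding Q_def by simp
  ultimately have "Q = UNIV" using maximal_ideal_eq[OF P] by blast
  then have "1 * 1 * b \<in> P" unfolding Q_def by blast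
  with not_in show False by simp
qed

subsection \<open>The Jacobson radical lies in every maximal ideal\<close>

lemma maximal_left_ideal_span:
  assumes M: "maximal_left_ideal M" and b: "b \<notin> M"
  shows "\<exists>s. \<exists>m\<in>M. x = s * b + m"
proof -
  define L where "L = {s * b + m | s m. m \<in> M}"
  have M_ideal: "left_ideal M" using maximal_left_idealD(1)[OF M] .
  have M0: "0 \<in> M" using M_ideal unfolding left_ideal_def by blast
  have "left_ideal L" unfolding left_ideal_def
  proof (intro conjI ballI allI)
    have "0 = 0 * b + 0" by simp
    then show "0 \<in> L" using M0 unfolding L_def by blast
  next
    fix x y assume "x \<in> L" "y \<in> L"
    then obtain s m t n where "x = s * b + m" "y = t * b + n" "m \<in> M" "n \<in> M"
      unfolding L_def by blast
    then have "x + y = (s + t) * b + (m + n)" "m + n \<in> M"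
      using left_ideal_add[OF M_ideal] by (simp_all add: algebra_simps)
    then show "x + y \<in> L" unfolding L_def by blast
  next
    fix x r assume "x \<in> L"
    then obtain s m where "x = s * b + m" "m \<in> M" unfolding L_def by blast
    then have "- x = (- s) * b + (- m)" "r * x = (r * s) * b + r * m" "- m \<in> M" "r * m \<in> M"
      using left_ideal_closed[OF M_ideal] by (simp_all add: algebra_simps)
    then show "- x \<in> L" "r * x \<in> L" unfolding L_def by blast+
  qed
  moreover have "M \<subseteq> L"
  proof
    fix m assume "m \<in> M"
    moreover have "m = 0 * b + m" by simp
    ultimately show "m \<in> L" unfolding L_def by blast
  qed
  moreover have "b \<in> L"
  proof -
    have "b = 1 * b + 0" by simp
    then show ?thesis using M0 unfolding L_def by blast
  qed
  ultimately have "L = UNIV" using maximal_left_ideal_eq[OF M] b by blast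
  then show ?thesis unfolding L_def by blast
qed

(* If r lies outside the maximal left ideal M, then {x. x * r \<in> M} is again a maximal
   left ideal (it is the kernel of the simple module map R \<rightarrow> R/M, x \<mapsto> x r + M). *)
lemma maximal_left_ideal_quotient:
  assumes M: "maximal_left_ideal M" and r: "r \<notin> M"
  shows "maximal_left_ideal {x. x * r \<in> M}"
  unfolding maximal_left_ideal_def
proof (intro conjI allI impI)
  show "left_ideal {x. x * r \<in> M}"
    using left_ideal_right_quotient[OF maximal_left_idealD(1)[OF M]] .
  show "{x. x * r \<in> M} \<noteq> UNIV" using r by (metis UNIV_I mem_Collect_eq mult_1)
  fix K assume K: "left_ideal K \<and> {x. x * r \<in> M} \<subseteq> K"
  show "K = {x. x * r \<in> M} \<or> K = UNIV"
  proof (cases "K = {x. x * r \<in> M}")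
    case False
    then obtain k where k: "k \<in> K" "k * r \<notin> M" using K by blast
    have "x \<in> K" for x
    proof -
      obtain s m where "m \<in> M" "x * r = s * (k * r) + m"
        using maximal_left_ideal_span[OF M k(2)] by blast
      then have "(x - s * k) * r \<in> M" by (simp add: algebra_simps)
      then have "x - s * k \<in> K" using K by blast
      moreover have "s * k \<in> K" using K k(1) left_ideal_closed(2) by blast
      ultimately have "(x - s * k) + s * k \<in> K" using K left_ideal_add by blast
      then show ?thesis by simp
    qed
    then show ?thesis by blast
  qed simp
qed

(* The Jacobson radical is closed under right multiplication: j * r lies in every
   maximal left ideal M, since j lies in the maximal left ideal {x. x * r \<in> M}. *)
lemma jacobson_right_mult:
  assumes j: "j \<in> jacobson" and M: "maximal_left_ideal M"
  shows "j * r \<in> M"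
proof (cases "r \<in> M")
  case True
  then show ?thesis using left_ideal_closed(2)[OF maximal_left_idealD(1)[OF M]] by blast
next
  case False
  then have "j \<in> {x. x * r \<in> M}"
    using j maximal_left_ideal_quotient[OF M] unfolding jacobson_def by blast
  then show ?thesis by simp
qed

(* J(R) is contained in every maximal two-sided ideal P: choose a maximal left ideal
   M \<supseteq> P; its two-sided core {x. xR \<subseteq> M} is a proper ideal containing P, hence P,
   and it contains J(R) by the previous lemma. *)
lemma jacobson_subset_maximal_ideal:
  fixes P :: "'a::ring_1 set"
  assumes P: "maximal_ideal P"
  shows "jacobson \<subseteq> P"
proof
  fix j :: 'a assume j: "j \<in> jacobson"
  have P_ideal: "two_sided_ideal P" using maximal_idealD(1)[OF P] .
  then have "left_ideal P" using two_sided_ideal_iff_left by blast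
  moreover have "P \<noteq> UNIV" using maximal_idealD(2)[OF P] by blast
  ultimately obtain M where M: "maximal_left_ideal M" "P \<subseteq> M"
    using exists_maximal_left_ideal by blast
  define Q where "Q = {x. \<forall>r. x * r \<in> M}"
  have "two_sided_ideal Q" unfolding Q_def using left_ideal_core maximal_left_idealD(1)[OF M(1)] .
  moreover have "P \<subseteq> Q" using two_sided_ideal_closed(3)[OF P_ideal] M(2) unfolding Q_def by blast
  moreover have "Q \<noteq> UNIV"
  proof
    assume "Q = UNIV"
    then have "1 * 1 \<in> M" unfolding Q_def by blast
    then show False using maximal_left_idealD(2)[OF M(1)] by simp
  qed
  ultimately have "Q = P" using maximal_ideal_eq[OF P] by blast
  moreover have "j \<in> Q" using jacobson_right_mult[OF j M(1)] unfolding Q_def by blast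
  ultimately show "j \<in> P" by blast
qed

lemma corner_in_J_split:
  assumes "corner_in_J e" "maximal_ideal P"
  shows "e \<in> P \<or> 1 - e \<in> P"
  using maximal_ideal_prime[OF assms(2)] assms jacobson_subset_maximal_ideal
  unfolding corner_in_J_def by blast

subsection \<open>Closed sets of the maximal spectrum\<close>

lemma maximal_ideal_diff:
  assumes "maximal_ideal P" "x \<in> P" "y \<in> P"
  shows "x - y \<in> P"
proof -
  have "left_ideal P" using maximal_idealD(1)[OF assms(1)] two_sided_ideal_iff_left by blast
  then show ?thesis using left_ideal_diff assms(2,3) by blast
qed

lemma ideal_gen_ideal: "two_sided_ideal (ideal_gen S)"
  unfolding ideal_gen_def two_sided_ideal_def by blast

lemma ideal_gen_subset: "S \<subseteq> ideal_gen S"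
  unfolding ideal_gen_def by blast

lemma ideal_gen_least: "two_sided_ideal I \<Longrightarrow> S \<subseteq> I \<Longrightarrow> ideal_gen S \<subseteq> I"
  unfolding ideal_gen_def by blast

lemma V_iff: "P \<in> V I \<longleftrightarrow> maximal_ideal P \<and> I \<subseteq> P"
  unfolding V_def MaxSpec_def by blast

lemma V_elem_iff: "P \<in> V_elem a \<longleftrightarrow> maximal_ideal P \<and> a \<in> P"
proof
  assume "P \<in> V_elem a"
  then show "maximal_ideal P \<and> a \<in> P"
    using ideal_gen_subset[of "{a}"] unfolding V_elem_def V_iff by blast
next
  assume P: "maximal_ideal P \<and> a \<in> P"
  then have "ideal_gen {a} \<subseteq> P" using ideal_gen_least[OF maximal_idealD(1)] by blast
  then show "P \<in> V_elem a" using P unfolding V_elem_def V_iff by blast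
qed

lemma max_closed_V_elem: "max_closed (V_elem a)"
  unfolding max_closed_def V_elem_def by (intro exI[of _ "ideal_gen {a}"] conjI ideal_gen_ideal refl)

lemma V_subset_V_elem: "i \<in> I \<Longrightarrow> V I \<subseteq> V_elem i"
  unfolding V_iff V_elem_iff subset_iff by blast

lemma maximal_ideal_complement:
  assumes P: "maximal_ideal P" and "x \<in> P"
  shows "1 - x \<notin> P"
proof
  assume "1 - x \<in> P"
  with \<open>x \<in> P\<close> have "x + (1 - x) \<in> P" by (rule two_sided_ideal_add[OF maximal_idealD(1)[OF P]])
  then show False using maximal_idealD(2)[OF P] by simp
qed

lemma V_elem_disjoint: "V_elem a \<inter> V_elem (1 - a) = {}"
  using maximal_ideal_complement V_elem_iff by blast

lemma full_iff: "full u \<longleftrightarrow> (\<forall>P. maximal_ideal P \<longrightarrow> u \<notin> P)"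
proof
  assume "full u"
  then show "\<forall>P. maximal_ideal P \<longrightarrow> u \<notin> P"
    using ideal_gen_least[OF maximal_idealD(1), of _ "{u}"] maximal_idealD(2) unfolding full_def
    by blast
next
  assume no_max: "\<forall>P. maximal_ideal P \<longrightarrow> u \<notin> P"
  show "full u"
  proof (rule ccontr)
    assume "\<not> full u"
    then obtain P where "maximal_ideal P" "ideal_gen {u} \<subseteq> P"
      using exists_maximal_ideal[OF ideal_gen_ideal] unfolding full_def by blast
    then show False using no_max ideal_gen_subset[of "{u}"] by blast
  qed
qed

definition ideal_sum :: "'a::ring_1 set \<Rightarrow> 'a set \<Rightarrow> 'a set" where
  "ideal_sum I K = {i + k | i k. i \<in> I \<and> k \<in> K}"

lemma ideal_sum_ideal:
  assumes I: "two_sided_ideal I" and K: "two_sided_ideal K"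
  shows "two_sided_ideal (ideal_sum I K)"
  unfolding two_sided_ideal_def
proof (intro conjI ballI allI)
  have "0 \<in> I" "0 \<in> K" using I K unfolding two_sided_ideal_def by simp_all
  then have "0 + 0 \<in> ideal_sum I K" unfolding ideal_sum_def by blast
  then show "0 \<in> ideal_sum I K" by simp
next
  fix x y assume "x \<in> ideal_sum I K" "y \<in> ideal_sum I K"
  then obtain i k i' k' where "x = i + k" "y = i' + k'" "i \<in> I" "k \<in> K" "i' \<in> I" "k' \<in> K"
    unfolding ideal_sum_def by blast
  then have "x + y = (i + i') + (k + k')" "i + i' \<in> I" "k + k' \<in> K"
    using two_sided_ideal_add[OF I] two_sided_ideal_add[OF K] by (simp_all add: algebra_simps)
  then show "x + y \<in> ideal_sum I K" unfolding ideal_sum_def by blast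
next
  fix r x assume "x \<in> ideal_sum I K"
  then obtain i k where "x = i + k" "i \<in> I" "k \<in> K" unfolding ideal_sum_def by blast
  then have "- x = (- i) + (- k)" "r * x = r * i + r * k" "x * r = i * r + k * r"
    "- i \<in> I" "r * i \<in> I" "i * r \<in> I" "- k \<in> K" "r * k \<in> K" "k * r \<in> K"
    using two_sided_ideal_closed[OF I] two_sided_ideal_closed[OF K]
    by (simp_all add: algebra_simps)
  then show "- x \<in> ideal_sum I K" "r * x \<in> ideal_sum I K" "x * r \<in> ideal_sum I K"
    unfolding ideal_sum_def by blast+
qed

(* Disjoint closed sets come from comaximal ideals: if V(I) \<inter> V(K) = {}, no maximal
   ideal contains I + K, so I + K = R and 1 = i + k with i \<in> I, k \<in> K. *)
lemma comaximal_if_V_disjoint: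
  assumes I: "two_sided_ideal I" and K: "two_sided_ideal K" and disj: "V I \<inter> V K = {}"
  shows "\<exists>i\<in>I. \<exists>k\<in>K. i + k = 1"
proof -
  have I_sub: "I \<subseteq> ideal_sum I K"
  proof
    fix i assume "i \<in> I"
    moreover have "i = i + 0" "0 \<in> K" using K unfolding two_sided_ideal_def by simp_all
    ultimately show "i \<in> ideal_sum I K" unfolding ideal_sum_def by blast
  qed
  have K_sub: "K \<subseteq> ideal_sum I K"
  proof
    fix k assume "k \<in> K"
    moreover have "k = 0 + k" "0 \<in> I" using I unfolding two_sided_ideal_def by simp_all
    ultimately show "k \<in> ideal_sum I K" unfolding ideal_sum_def by blast
  qed
  have "ideal_sum I K = UNIV"
  proof (rule ccontr)
    assume "ideal_sum I K \<noteq> UNIV"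
    then obtain P where "maximal_ideal P" "ideal_sum I K \<subseteq> P"
      using exists_maximal_ideal[OF ideal_sum_ideal[OF I K]] by blast
    then have "P \<in> V I \<inter> V K" using I_sub K_sub V_iff by blast
    with disj show False by blast
  qed
  then have "1 \<in> ideal_sum I K" by blast
  then show ?thesis unfolding ideal_sum_def by force
qed

subsection \<open>Feckly clean elements\<close>

(* For e with eR(1 - e) \<subseteq> J(R), the
   element b - e is full iff e separates V(1 - b) from V(b); both directions are a case
   split over the alternative e \<in> P or 1 - e \<in> P. *)
lemma full_diff_iff_separates:
  assumes e: "corner_in_J e"
  shows "full (b - e) \<longleftrightarrow> V_elem (1 - b) \<subseteq> V_elem e \<and> V_elem b \<subseteq> V_elem (1 - e)"
proof
  assume "full (b - e)"
  then have u: "b - e \<notin> P" if "maximal_ideal P" for P using full_iff that by blast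
  show "V_elem (1 - b) \<subseteq> V_elem e \<and> V_elem b \<subseteq> V_elem (1 - e)"
  proof (intro conjI subsetI)
    fix P assume "P \<in> V_elem (1 - b)"
    then have P: "maximal_ideal P" "1 - b \<in> P" using V_elem_iff by blast+
    have "e \<in> P"
    proof (rule ccontr)
      assume "e \<notin> P"
      then have "1 - e \<in> P" using corner_in_J_split[OF e P(1)] by blast
      then have "(1 - e) - (1 - b) \<in> P" using maximal_ideal_diff P by blast
      then show False using u[OF P(1)] by (simp add: algebra_simps)
    qed
    then show "P \<in> V_elem e" using P(1) V_elem_iff by blast
  next
    fix P assume "P \<in> V_elem b"
    then have P: "maximal_ideal P" "b \<in> P" using V_elem_iff by blast+
    have "1 - e \<in> P"
    proof (rule ccontr)
      assume "1 - e \<notin> P"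
      then have "e \<in> P" using corner_in_J_split[OF e P(1)] by blast
      then have "b - e \<in> P" using maximal_ideal_diff P by blast
      then show False using u[OF P(1)] by blast
    qed
    then show "P \<in> V_elem (1 - e)" using P(1) V_elem_iff by blast
  qed
next
  assume sep: "V_elem (1 - b) \<subseteq> V_elem e \<and> V_elem b \<subseteq> V_elem (1 - e)"
  show "full (b - e)" unfolding full_iff
  proof (intro allI impI notI)
    fix P assume P: "maximal_ideal P" and be: "b - e \<in> P"
    consider "e \<in> P" | "1 - e \<in> P" using corner_in_J_split[OF e P] by blast
    then show False
    proof cases
      case 1
      have "(b - e) - (- e) \<in> P"
        using maximal_ideal_diff[OF P be] two_sided_ideal_closed(1)[OF maximal_idealD(1)[OF P] 1]
        by blast
      then have "b \<in> P" by simp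
      then have "1 - e \<in> P" using sep P V_elem_iff by blast
      then show False using maximal_ideal_complement[OF P 1] by blast
    next
      case 2
      have "(1 - e) - (b - e) \<in> P" using maximal_ideal_diff[OF P 2 be] .
      then have "1 - b \<in> P" by (simp add: algebra_simps)
      then have "e \<in> P" using sep P V_elem_iff by blast
      then show False using maximal_ideal_complement[OF P] 2 by blast
    qed
  qed
qed

lemma feckly_clean_elem_iff:
  "feckly_clean_elem b \<longleftrightarrow>
     (\<exists>e. V_elem (1 - b) \<subseteq> V_elem e \<and> V_elem b \<subseteq> V_elem (1 - e) \<and> corner_in_J e)"
proof -
  have "feckly_clean_elem b \<longleftrightarrow> (\<exists>e. full (b - e) \<and> corner_in_J e)"
    unfolding feckly_clean_elem_def by (metis add_diff_cancel_left' diff_add_cancel add.commute)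
  then show ?thesis using full_diff_iff_separates by blast
qed

(* (1) \<longleftrightarrow> (3): substitute b = 1 - a in the previous characterisation. *)
lemma feckly_clean_iff_separation:
  "feckly_clean TYPE('a::ring_1) \<longleftrightarrow>
     (\<forall>a::'a. \<exists>e. V_elem a \<subseteq> V_elem e \<and> V_elem (1 - a) \<subseteq> V_elem (1 - e) \<and> corner_in_J e)"
proof -
  let ?sep = "\<lambda>b::'a. \<exists>e. V_elem (1 - b) \<subseteq> V_elem e \<and> V_elem b \<subseteq> V_elem (1 - e) \<and> corner_in_J e"
  have "feckly_clean TYPE('a) \<longleftrightarrow> (\<forall>b. ?sep b)"
    unfolding feckly_clean_def feckly_clean_elem_iff ..
  also have "\<dots> \<longleftrightarrow> (\<forall>a. ?sep (1 - a))"
  proof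
    assume all_a: "\<forall>a. ?sep (1 - a)"
    show "\<forall>b. ?sep b"
    proof
      fix b :: 'a
      have "?sep (1 - (1 - b))" using all_a by blast
      then show "?sep b" by simp
    qed
  qed blast
  finally show ?thesis by simp
qed

subsection \<open>Separating closed sets\<close>

(* (2) \<longleftrightarrow> (3): the sets V(a), V(1 - a) are disjoint and closed; conversely disjoint
   closed sets V(I), V(K) give 1 = i + k, and an e separating V(i) from V(1 - i) = V(k)
   separates V(I) \<subseteq> V(i) from V(K) \<subseteq> V(k). *)
lemma closed_separation_iff_elem_separation:
  "(\<forall>A B :: 'a::ring_1 set set. max_closed A \<and> max_closed B \<and> A \<inter> B = {} \<longrightarrow>
      (\<exists>e. A \<subseteq> V_elem e \<and> B \<subseteq> V_elem (1 - e) \<and> corner_in_J e))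
   \<longleftrightarrow> (\<forall>a::'a. \<exists>e. V_elem a \<subseteq> V_elem e \<and> V_elem (1 - a) \<subseteq> V_elem (1 - e) \<and> corner_in_J e)"
  (is "?closed \<longleftrightarrow> ?elem")
proof
  assume ?closed
  then show ?elem using max_closed_V_elem V_elem_disjoint by blast
next
  assume elem: ?elem
  show ?closed
  proof (intro allI impI)
    fix A B :: "'a set set"
    assume AB: "max_closed A \<and> max_closed B \<and> A \<inter> B = {}"
    then obtain I K where IK: "two_sided_ideal I" "A = V I" "two_sided_ideal K" "B = V K"
      unfolding max_closed_def by blast
    then obtain i k where ik: "i \<in> I" "k \<in> K" "i + k = 1"
      using comaximal_if_V_disjoint AB by blast
    obtain e where e: "V_elem i \<subseteq> V_elem e" "V_elem (1 - i) \<subseteq> V_elem (1 - e)" "corner_in_J e"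
      using elem by blast
    have "1 - i = k" using ik(3) by (simp add: algebra_simps)
    then have "A \<subseteq> V_elem e" "B \<subseteq> V_elem (1 - e)"
      using V_subset_V_elem[OF ik(1)] V_subset_V_elem[OF ik(2)] e(1,2) IK(2,4) by blast+
    then show "\<exists>e. A \<subseteq> V_elem e \<and> B \<subseteq> V_elem (1 - e) \<and> corner_in_J e" using e(3) by blast
  qed
qed

theorem theorem2p3:
  shows "(feckly_clean TYPE('a::ring_1) \<longleftrightarrow>
           (\<forall>A B :: 'a set set. max_closed A \<and> max_closed B \<and> A \<inter> B = {} \<longrightarrow>
              (\<exists>e. A \<subseteq> V_elem e \<and> B \<subseteq> V_elem (1 - e) \<and> corner_in_J e)))
       \<and> ((\<forall>A B :: 'a set set. max_closed A \<and> max_closed B \<and> A \<inter> B = {} \<longrightarrow>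
              (\<exists>e. A \<subseteq> V_elem e \<and> B \<subseteq> V_elem (1 - e) \<and> corner_in_J e))
          \<longleftrightarrow> (\<forall>a::'a. \<exists>e. V_elem a \<subseteq> V_elem e \<and> V_elem (1 - a) \<subseteq> V_elem (1 - e)
                              \<and> corner_in_J e))"
  using feckly_clean_iff_separation closed_separation_iff_elem_separation by blast

end
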